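(* In a hierarchical tensor factorization with mode tree $\mathcal T$, for any $\nu\in\mathrm{int}(\mathcal T)$: $$\|\mathcal W^{(\nu,:)}\|\le\|W^{(\nu)}\|\cdot\prod_{\nu_c\in C(\nu)}\|\mathcal W^{(\nu_c,:)}\|.$$
   Context: Fix $N\in\mathbb N$, $D_1,\dots,D_N\in\mathbb N$; $[K]:=\{1,\dots,K\}$; norms are Frobenius norms; $\otimes$ the tensor product. A mode tree $\mathcal T$ over $[N]$ is a rooted tree whose nodes are labeled by subsets of $[N]$, with exactly $N$ leaves labeled $\{1\},\dots,\{N\}$, and where each interior node's label is the union of its children's labels; nodes are identified with labels, root $[N]$, $\mathrm{int}(\mathcal T)$ interior nodes, $Pa(\nu)$ parent, $C(\nu)$ children (fixed order). A hierarchical tensor factorization has $R_\nu\in\mathbb N$ ($\nu\in\mathrm{int}(\mathcal T)$), $R_{Pa([N])}:=1$, $R_{\{n\}}:=D_n$, weight matrices $W^{(\nu)}\in\mathbb R^{R_\nu\times R_{Pa(\nu)}}$. Intermediate tensors: $\mathcal W^{(\{n\},r)}:=W^{(\{n\})}_{:,r}$; for $\nu\in\mathrm{int}(\mathcal T)\setminus\{[N]\}$ (leaves to root), $r\in[R_{Pa(\nu)}]$: $\mathcal W^{(\nu,r)}:=\pi_\nu\big(\sum_{r'=1}^{R_\nu}W^{(\nu)}_{r',r}\bigotimes_{\nu_c\in C(\nu)}\mathcal W^{(\nu_c,r')}\big)$; end tensor $\mathcal W_H:=\pi_{[N]}\big(\sum_{r'=1}^{R_{[N]}}W^{([N])}_{r',1}\bigotimes_{\nu_c\in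 C([N])}\mathcal W^{(\nu_c,r')}\big)$, where $\pi_\nu$ permutes modes (ordered by children, each child's elements ascending) into ascending order of the elements of $\nu$; by convention $\mathcal W^{([N],1)}:=\mathcal W_H$. For $\nu\in\mathcal T$, $\mathcal W^{(\nu,:)}$ is the tensor obtained by stacking $(\mathcal W^{(\nu,r)})_{r=1}^{R_{Pa(\nu)}}$ along an additional last mode, i.e. $\mathcal W^{(\nu,:)}_{:,\dots,:,r}=\mathcal W^{(\nu,r)}$. *)

theory Defs
  imports "HOL-Analysis.Analysis"
begin

datatype mtree = Leaf nat | Node "mtree list"

fun label :: "mtree \<Rightarrow> nat set" where
  "label (Leaf n) = {n}"
| "label (Node cs) = (\<Union>c\<in>set cs. label c)"

fun subtrees :: "mtree \<Rightarrow> mtree list" where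
  "subtrees (Leaf n) = [Leaf n]"
| "subtrees (Node cs) = Node cs # concat (map subtrees cs)"

fun leaves :: "mtree \<Rightarrow> nat list" where
  "leaves (Leaf n) = [n]"
| "leaves (Node cs) = concat (map leaves cs)"

text \<open>A mode tree over [N]: exactly N leaves labelled {1},...,{N}, root label [N],
  no childless interior node, and distinct labels (nodes are identified with labels).\<close>
definition mode_tree :: "nat \<Rightarrow> mtree \<Rightarrow> bool" where
  "mode_tree N T \<longleftrightarrow>
     mset (leaves T) = mset [1..<N+1] \<and>
     label T = {1..N} \<and>
     (\<forall>s\<in>set (subtrees T). s \<noteq> Node []) \<and>
     distinct (map label (subtrees T))"

text \<open>All nodes of the tree, each paired with the rank R_{Pa(nu)} of its parent
  (the root gets parent rank R_{Pa([N])} = 1 when called with p = 1).\<close>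
fun nodes_pr :: "(nat set \<Rightarrow> nat) \<Rightarrow> mtree \<Rightarrow> nat \<Rightarrow> (mtree \<times> nat) set" where
  "nodes_pr R (Leaf n) p = {(Leaf n, p)}"
| "nodes_pr R (Node cs) p =
     insert (Node cs, p) (\<Union>c\<in>set cs. nodes_pr R c (R (label (Node cs))))"

text \<open>A tensor over the modes of nu is represented as a
  function of an index assignment idx (idx n \<in> {1..D n} for n \<in> nu); modes are
  addressed by their label, so the mode permutation pi_nu is implicit.
  W nu r' r is the entry (r', r) of the weight matrix W^{(nu)} (1-based).\<close>
fun tens :: "(nat set \<Rightarrow> nat) \<Rightarrow> (nat set \<Rightarrow> nat \<Rightarrow> nat \<Rightarrow> real) \<Rightarrow> mtree \<Rightarrow> nat \<Rightarrow> (nat \<Rightarrow> nat) \<Rightarrow> real" where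
  "tens R W (Leaf n) r idx = W {n} (idx n) r"
| "tens R W (Node cs) r idx =
     (\<Sum>r'\<in>{1..R (label (Node cs))}. W (label (Node cs)) r' r *
        prod_list (map (\<lambda>c. tens R W c r' idx) cs))"

definition idx_set :: "(nat \<Rightarrow> nat) \<Rightarrow> nat set \<Rightarrow> (nat \<Rightarrow> nat) set" where
  "idx_set D S = PiE S (\<lambda>n. {1..D n})"

text \<open>Frobenius norm of the stacked tensor W^{(nu,:)}, whose last mode has size p = R_{Pa(nu)}.\<close>
definition stack_norm :: "(nat \<Rightarrow> nat) \<Rightarrow> (nat set \<Rightarrow> nat) \<Rightarrow> (nat set \<Rightarrow> nat \<Rightarrow> nat \<Rightarrow> real)
    \<Rightarrow> mtree \<Rightarrow> nat \<Rightarrow> real" where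
  "stack_norm D R W t p =
     sqrt (\<Sum>r\<in>{1..p}. \<Sum>idx\<in>idx_set D (label t). (tens R W t r idx)\<^sup>2)"

definition mat_norm :: "(nat \<Rightarrow> nat \<Rightarrow> real) \<Rightarrow> nat \<Rightarrow> nat \<Rightarrow> real" where
  "mat_norm A m p = sqrt (\<Sum>i\<in>{1..m}. \<Sum>j\<in>{1..p}. (A i j)\<^sup>2)"

end

theory Submission
  imports Defs
begin

text \<open>Entrywise, \<open>\<W>(\<nu>,r) = \<Sum>\<^sub>r\<^sub>' W\<^sup>(\<^sup>\<nu>\<^sup>)(r',r) P(r')\<close>, where \<open>P(r')\<close> is the tensor product
  of the children's tensors \<open>\<W>(\<nu>\<^sub>c,r')\<close>. Cauchy-Schwarz in \<open>r'\<close> bounds \<open>\<parallel>\<W>(\<nu>,:)\<parallel>\<^sup>2\<close> by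
  \<open>\<parallel>W\<^sup>(\<^sup>\<nu>\<^sup>)\<parallel>\<^sup>2 \<Sum>\<^sub>r\<^sub>' \<parallel>P(r')\<parallel>\<^sup>2\<close>. Since the children act on disjoint sets of modes,
  \<open>\<parallel>P(r')\<parallel>\<^sup>2 = \<Prod>\<^sub>c \<parallel>\<W>(\<nu>\<^sub>c,r')\<parallel>\<^sup>2\<close>, and for nonnegative numbers
  \<open>\<Sum>\<^sub>r\<^sub>' \<Prod>\<^sub>c a(c,r') \<le> \<Prod>\<^sub>c \<Sum>\<^sub>r\<^sub>' a(c,r')\<close>, which here is \<open>\<Prod>\<^sub>c \<parallel>\<W>(\<nu>\<^sub>c,:)\<parallel>\<^sup>2\<close>.\<close>

lemma label_eq_set_leaves: "label t = set (leaves t)"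
  by (induction t) auto

lemma finite_label [simp]: "finite (label t)"
  by (simp add: label_eq_set_leaves)

lemma tens_cong:
  "(\<And>n. n \<in> label t \<Longrightarrow> idx n = idx' n) \<Longrightarrow> tens R W t r idx = tens R W t r idx'"
proof (induction t arbitrary: r)
  case (Leaf n)
  then show ?case by simp
next
  case (Node cs)
  have "\<And>r'. map (\<lambda>c. tens R W c r' idx) cs = map (\<lambda>c. tens R W c r' idx') cs"
    using Node by (auto intro!: map_cong)
  then show ?case by (simp only: tens.simps)
qed

lemma subtree_of_nodes_pr: "(s, q) \<in> nodes_pr R T p \<Longrightarrow> s \<in> set (subtrees T)"
  by (induction T arbitrary: p) auto

lemma distinct_leaves_subtree:
  "distinct (leaves T) \<Longrightarrow> s \<in> set (subtrees T) \<Longrightarrow> distinct (leaves s)"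
  by (induction T) (auto simp: distinct_concat_iff)

lemma mode_tree_distinct_leaves: "mode_tree N T \<Longrightarrow> distinct (leaves T)"
  unfolding mode_tree_def by (metis distinct_upt mset_eq_imp_distinct_iff)

lemma sum_PiE_Un_mult:
  fixes g h :: "('a \<Rightarrow> 'b) \<Rightarrow> 'c::comm_semiring_1"
  assumes "A \<inter> B = {}" "finite A" "finite B" "\<And>i. finite (E i)"
    and g: "\<And>x y. (\<And>i. i \<in> A \<Longrightarrow> x i = y i) \<Longrightarrow> g x = g y"
    and h: "\<And>x y. (\<And>i. i \<in> B \<Longrightarrow> x i = y i) \<Longrightarrow> h x = h y"
  shows "(\<Sum>z\<in>PiE (A \<union> B) E. g z * h z) = (\<Sum>x\<in>PiE A E. g x) * (\<Sum>y\<in>PiE B E. h y)"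
proof -
  have "(\<Sum>z\<in>PiE (A \<union> B) E. g z * h z) = (\<Sum>(x, y)\<in>PiE A E \<times> PiE B E. g x * h y)"
    using assms(1)
    by (intro sum.reindex_bij_witness[where i = "\<lambda>(x, y) i. if i \<in> A then x i else y i"
          and j = "\<lambda>z. (restrict z A, restrict z B)"])
       (auto simp: PiE_def extensional_def fun_eq_iff intro!: arg_cong2[where f = "(*)"] g h)
  also have "\<dots> = (\<Sum>x\<in>PiE A E. g x) * (\<Sum>y\<in>PiE B E. h y)"
    by (simp add: sum_product sum.cartesian_product)
  finally show ?thesis .
qed

lemma sum_idx_set_prod_list:
  fixes f :: "mtree \<Rightarrow> (nat \<Rightarrow> nat) \<Rightarrow> 'a::comm_semiring_1"
  assumes "distinct (concat (map leaves cs))"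
    and "\<And>c x y. c \<in> set cs \<Longrightarrow> (\<And>n. n \<in> label c \<Longrightarrow> x n = y n) \<Longrightarrow> f c x = f c y"
  shows "(\<Sum>x\<in>idx_set D (\<Union>c\<in>set cs. label c). prod_list (map (\<lambda>c. f c x) cs))
       = prod_list (map (\<lambda>c. \<Sum>x\<in>idx_set D (label c). f c x) cs)"
  using assms
proof (induction cs)
  case Nil
  then show ?case by (simp add: idx_set_def)
next
  case (Cons c cs)
  have "label c \<inter> (\<Union>c\<in>set cs. label c) = {}"
    using Cons.prems(1) by (auto simp: label_eq_set_leaves)
  then have "(\<Sum>x\<in>idx_set D (label c \<union> (\<Union>c\<in>set cs. label c)). f c x * prod_list (map (\<lambda>c. f c x) cs))
      = (\<Sum>x\<in>idx_set D (label c). f c x) * (\<Sum>x\<in>idx_set D (\<Union>c\<in>set cs. label c). prod_list (map (\<lambda>c. f c x) cs))"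
    unfolding idx_set_def
  proof (rule sum_PiE_Un_mult)
    show "f c x = f c y" if "\<And>n. n \<in> label c \<Longrightarrow> x n = y n" for x y
      using Cons.prems(2)[of c x y] that by simp
    show "prod_list (map (\<lambda>c. f c x) cs) = prod_list (map (\<lambda>c. f c y) cs)"
      if agree: "\<And>n. n \<in> (\<Union>c\<in>set cs. label c) \<Longrightarrow> x n = y n" for x y
    proof -
      have "f c' x = f c' y" if "c' \<in> set cs" for c'
        using Cons.prems(2)[of c' x y] that agree by auto
      then show ?thesis
        by (metis map_cong)
    qed
  qed auto
  moreover have "(\<Sum>x\<in>idx_set D (\<Union>c\<in>set cs. label c). prod_list (map (\<lambda>c. f c x) cs))
      = prod_list (map (\<lambda>c. \<Sum>x\<in>idx_set D (label c). f c x) cs)"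
  proof (rule Cons.IH)
    show "distinct (concat (map leaves cs))"
      using Cons.prems(1) by simp
    show "f c' x = f c' y" if "c' \<in> set cs" "\<And>n. n \<in> label c' \<Longrightarrow> x n = y n" for c' x y
      using Cons.prems(2)[of c' x y] that by simp
  qed
  ultimately show ?case
    by simp
qed

lemma sum_prod_list_le_prod_list_sum:
  fixes a :: "'a \<Rightarrow> 'b \<Rightarrow> 'c::linordered_semiring_1"
  assumes "finite S" "cs \<noteq> []" "\<And>c r. a c r \<ge> 0"
  shows "(\<Sum>r\<in>S. prod_list (map (\<lambda>c. a c r) cs)) \<le> prod_list (map (\<lambda>c. \<Sum>r\<in>S. a c r) cs)"
  using assms(2)
proof (induction cs rule: list_nonempty_induct)
  case (single c)
  then show ?case by simp
next
  case (cons c cs)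
  let ?Q = "\<lambda>r. prod_list (map (\<lambda>c. a c r) cs)"
  have Q_nonneg: "?Q r \<ge> 0" for r
    by (rule prod_list_nonneg) (auto simp: assms(3))
  have "(\<Sum>r\<in>S. a c r * ?Q r) \<le> (\<Sum>r\<in>S. \<Sum>r'\<in>S. a c r * ?Q r')"
    using assms(1,3) Q_nonneg
    by (intro sum_mono member_le_sum[where f = "\<lambda>r'. a c _ * ?Q r'"]) auto
  also have "\<dots> = (\<Sum>r\<in>S. a c r) * (\<Sum>r\<in>S. ?Q r)"
    by (simp add: sum_product)
  also have "\<dots> \<le> (\<Sum>r\<in>S. a c r) * prod_list (map (\<lambda>c. \<Sum>r\<in>S. a c r) cs)"
    using cons.IH by (intro mult_left_mono) (auto intro: sum_nonneg assms(3))
  finally show ?case by simp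
qed

lemma sum_sq_matrix_product_le:
  "(\<Sum>a\<in>A. \<Sum>c\<in>C. (\<Sum>b\<in>B. M b a * P b c)\<^sup>2)
     \<le> (\<Sum>b\<in>B. \<Sum>a\<in>A. (M b a)\<^sup>2) * (\<Sum>c\<in>C. \<Sum>b\<in>B. (P b c)\<^sup>2 :: real)"
proof -
  have "(\<Sum>a\<in>A. \<Sum>c\<in>C. (\<Sum>b\<in>B. M b a * P b c)\<^sup>2)
      \<le> (\<Sum>a\<in>A. \<Sum>c\<in>C. (\<Sum>b\<in>B. (M b a)\<^sup>2) * (\<Sum>b\<in>B. (P b c)\<^sup>2))"
    by (intro sum_mono Cauchy_Schwarz_ineq_sum)
  also have "\<dots> = (\<Sum>a\<in>A. \<Sum>b\<in>B. (M b a)\<^sup>2) * (\<Sum>c\<in>C. \<Sum>b\<in>B. (P b c)\<^sup>2)"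
    by (rule sum_product[symmetric])
  also have "(\<Sum>a\<in>A. \<Sum>b\<in>B. (M b a)\<^sup>2) = (\<Sum>b\<in>B. \<Sum>a\<in>A. (M b a)\<^sup>2)"
    by (rule sum.swap)
  finally show ?thesis .
qed

lemma stack_norm_nonneg: "stack_norm D R W t p \<ge> 0"
  by (simp add: stack_norm_def sum_nonneg)

lemma stack_norm_sq:
  "(stack_norm D R W t p)\<^sup>2 = (\<Sum>r\<in>{1..p}. \<Sum>idx\<in>idx_set D (label t). (tens R W t r idx)\<^sup>2)"
  by (simp add: stack_norm_def sum_nonneg)

lemma mat_norm_nonneg: "mat_norm A m p \<ge> 0"
  by (simp add: mat_norm_def sum_nonneg)

lemma mat_norm_sq: "(mat_norm A m p)\<^sup>2 = (\<Sum>i\<in>{1..m}. \<Sum>j\<in>{1..p}. (A i j)\<^sup>2)"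
  by (simp add: mat_norm_def sum_nonneg)

lemma sum_sq_prod_list_tens_le:
  assumes "distinct (concat (map leaves cs))" "cs \<noteq> []"
  shows "(\<Sum>idx\<in>idx_set D (label (Node cs)). \<Sum>r\<in>{1..K}. (prod_list (map (\<lambda>c. tens R W c r idx) cs))\<^sup>2)
           \<le> (prod_list (map (\<lambda>c. stack_norm D R W c K) cs))\<^sup>2"
proof -
  have "(\<Sum>idx\<in>idx_set D (label (Node cs)). \<Sum>r\<in>{1..K}. (prod_list (map (\<lambda>c. tens R W c r idx) cs))\<^sup>2)
      = (\<Sum>r\<in>{1..K}. \<Sum>idx\<in>idx_set D (\<Union>c\<in>set cs. label c). prod_list (map (\<lambda>c. (tens R W c r idx)\<^sup>2) cs))"
    by (subst sum.swap) (simp add: prod_list_power comp_def)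
  also have "\<dots> = (\<Sum>r\<in>{1..K}. prod_list (map (\<lambda>c. \<Sum>idx\<in>idx_set D (label c). (tens R W c r idx)\<^sup>2) cs))"
    by (intro sum.cong refl sum_idx_set_prod_list[OF assms(1)]) (metis tens_cong)
  also have "\<dots> \<le> prod_list (map (\<lambda>c. \<Sum>r\<in>{1..K}. \<Sum>idx\<in>idx_set D (label c). (tens R W c r idx)\<^sup>2) cs)"
    using assms(2) by (intro sum_prod_list_le_prod_list_sum) (auto intro: sum_nonneg)
  also have "\<dots> = (prod_list (map (\<lambda>c. stack_norm D R W c K) cs))\<^sup>2"
    by (simp add: prod_list_power stack_norm_sq comp_def)
  finally show ?thesis .
qed

theorem lemma8:
  fixes N :: nat and D :: "nat \<Rightarrow> nat" and R :: "nat set \<Rightarrow> nat"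
    and W :: "nat set \<Rightarrow> nat \<Rightarrow> nat \<Rightarrow> real" and T :: mtree
    and cs :: "mtree list" and p :: nat
  assumes "N \<ge> 1"
    and "mode_tree N T"
    and "\<forall>n\<in>{1..N}. D n \<ge> 1"
    and "\<forall>s\<in>set (subtrees T). (\<exists>xs. s = Node xs) \<longrightarrow> R (label s) \<ge> 1"
    and "(Node cs, p) \<in> nodes_pr R T 1"
  shows "stack_norm D R W (Node cs) p
           \<le> mat_norm (W (label (Node cs))) (R (label (Node cs))) p *
             prod_list (map (\<lambda>c. stack_norm D R W c (R (label (Node cs)))) cs)"
proof -
  define K where "K = R (label (Node cs))"
  define M where "M = W (label (Node cs))"
  define P where "P = (\<lambda>r idx. prod_list (map (\<lambda>c. tens R W c r idx) cs))"
  have node: "Node cs \<in> set (subtrees T)"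
    using assms(5) by (rule subtree_of_nodes_pr)
  have "distinct (concat (map leaves cs))"
    using distinct_leaves_subtree[OF mode_tree_distinct_leaves[OF assms(2)] node] by simp
  moreover have "cs \<noteq> []"
    using assms(2) node unfolding mode_tree_def by auto
  ultimately have children: "(\<Sum>idx\<in>idx_set D (label (Node cs)). \<Sum>r\<in>{1..K}. (P r idx)\<^sup>2)
      \<le> (prod_list (map (\<lambda>c. stack_norm D R W c K) cs))\<^sup>2"
    unfolding P_def by (rule sum_sq_prod_list_tens_le)
  have "(stack_norm D R W (Node cs) p)\<^sup>2
      = (\<Sum>r\<in>{1..p}. \<Sum>idx\<in>idx_set D (label (Node cs)). (\<Sum>r'\<in>{1..K}. M r' r * P r' idx)\<^sup>2)"
    by (simp add: stack_norm_sq K_def M_def P_def del: label.simps)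
  also have "\<dots> \<le> (mat_norm M K p)\<^sup>2 * (\<Sum>idx\<in>idx_set D (label (Node cs)). \<Sum>r\<in>{1..K}. (P r idx)\<^sup>2)"
    unfolding mat_norm_sq by (rule sum_sq_matrix_product_le)
  also have "\<dots> \<le> (mat_norm M K p * prod_list (map (\<lambda>c. stack_norm D R W c K) cs))\<^sup>2"
    using children by (simp add: power_mult_distrib mult_left_mono)
  finally show ?thesis
    unfolding K_def [symmetric] M_def [symmetric]
    by (rule power2_le_imp_le)
       (auto intro!: mult_nonneg_nonneg mat_norm_nonneg prod_list_nonneg stack_norm_nonneg)
qed

end
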